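(* Let $a=(a_i)_{i\in\mathbb Z}$ be a sequence of pairwise distinct complex numbers. Let $f\in\Lambda$ have degree $\le n$ and write $f=\sum_{\lambda:\,|\lambda|\le n}c(\lambda)s_{\lambda;a}$. Then the coefficients are determined recursively in $|\lambda|$ by $c(\varnothing)=f(0;0)$ and $$c(\lambda)=\frac{f(x(\lambda);y(\lambda))-\sum_{\mu\subset\lambda,\ \mu\ne\lambda}c(\mu)\,s_{\mu;a}(x(\lambda);y(\lambda))}{s_{\lambda;a}(x(\lambda);y(\lambda))}.$$
   Context: $\Lambda$ is the algebra of symmetric functions over $\mathbb C$ (graded by degree) with complete homogeneous $h_k$, elementary $e_k$, power sums $\mathbf p_k$. For a sequence $a$ define $h_{k;a}=\sum_{i=1}^k(-1)^{k-i}e_{k-i}(a_1,\dots,a_{k-1})h_i$ ($k\ge1$), $h_{0;a}=1$, $h_{k;a}=0$ ($k<0$); $(\tau^ra)_i=a_{i+r}$; $s_{\mu;a}=\det[h_{\mu_i-i+j;\,\tau^{1-j}a}]_{i,j=1}^N$ for any $N\ge\ell(\mu)$; $s_{\mu;a}$ equals the Schur function $s_\mu$ plus lower-degree terms, and these functions form a basis of $\Lambda$. Dual sequence: $\widehat a_i=-a_{1-i}$. Each $f\in\Lambda$ is evaluated at $(x;y)\in\mathbb C^d\times\mathbb C^d$ via $\mathbf p_k\mapsto\sum_ix_i^k+(-1)^{k-1}\sum_jy_j^k$. For a nonempty diagram $\lambda=(p_1,\dots,p_d\mid q_1,\dots,q_d)$ in Frobenius notation ($p_i=\lambda_i-i$,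 $q_i=\lambda'_i-i$, $d$ the number of diagonal boxes), $(x(\lambda);y(\lambda))=(a_{p_1+1},\dots,a_{p_d+1};\widehat a_{q_1+1},\dots,\widehat a_{q_d+1})$; and $(x(\varnothing);y(\varnothing))=(0;0)$. *)

theory Defs
  imports "HOL-Library.Poly_Mapping" "Jordan_Normal_Form.Determinant"
begin

text \<open>The algebra Lambda of symmetric functions over the complex numbers, modelled as the
free polynomial algebra in the power sums p_1, p_2, ... (over a field of characteristic 0
these are algebraically independent generators). A monomial is a finitely supported
exponent vector; variable index i stands for p_(i+1).\<close>

type_synonym symfun = "(nat \<Rightarrow>\<^sub>0 nat) \<Rightarrow>\<^sub>0 complex"

definition pvar :: "nat \<Rightarrow> symfun" where
  "pvar k = Poly_Mapping.single (Poly_Mapping.single (k - 1) 1) 1"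

definition constL :: "complex \<Rightarrow> symfun" where
  "constL c = Poly_Mapping.single 0 c"

definition wdeg :: "(nat \<Rightarrow>\<^sub>0 nat) \<Rightarrow> nat" where
  "wdeg m = (\<Sum>i\<in>Poly_Mapping.keys m. (i + 1) * Poly_Mapping.lookup m i)"

text \<open>Complete homogeneous symmetric functions via Newton's identity
  k h_k = sum_(i=1..k) p_i h_(k-i), h_0 = 1.\<close>
fun hlist :: "nat \<Rightarrow> symfun list" where
  "hlist 0 = [1]"
| "hlist (Suc k) = hlist k @
     [constL (1 / of_nat (Suc k)) * (\<Sum>i=1..Suc k. pvar i * (hlist k ! (Suc k - i)))]"

definition hcomp :: "nat \<Rightarrow> symfun" where
  "hcomp k = hlist k ! k"

definition esym :: "nat \<Rightarrow> complex list \<Rightarrow> complex" where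
  "esym j xs = (\<Sum>S\<in>{S. S \<subseteq> {..<length xs} \<and> card S = j}. \<Prod>i\<in>S. xs ! i)"

definition shiftseq :: "int \<Rightarrow> (int \<Rightarrow> complex) \<Rightarrow> int \<Rightarrow> complex" where
  "shiftseq r a = (\<lambda>i. a (i + r))"

definition hshift :: "int \<Rightarrow> (int \<Rightarrow> complex) \<Rightarrow> symfun" where
  "hshift k a = (if k < 0 then 0 else if k = 0 then 1 else
     (\<Sum>i=1..nat k. constL ((-1) ^ (nat k - i) *
         esym (nat k - i) (map (\<lambda>m. a (int m)) [1..<nat k])) * hcomp i))"

definition is_partition :: "nat list \<Rightarrow> bool" where
  "is_partition l \<longleftrightarrow> sorted_wrt (\<ge>) l \<and> (\<forall>x\<in>set l. 0 < x)"

definition subdiag :: "nat list \<Rightarrow> nat list \<Rightarrow> bool" where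
  "subdiag mu l \<longleftrightarrow> length mu \<le> length l \<and> (\<forall>i<length mu. mu ! i \<le> l ! i)"

text \<open>s_{mu;a}, as the N x N determinant with N = length mu (0-indexed rows/columns).\<close>
definition schurA :: "nat list \<Rightarrow> (int \<Rightarrow> complex) \<Rightarrow> symfun" where
  "schurA mu a = det (mat (length mu) (length mu)
     (\<lambda>(i, j). hshift (int (mu ! i) - int i + int j) (shiftseq (- int j) a)))"

text \<open>Conjugate partition lambda'_i (1-indexed i).\<close>
definition conjp :: "nat list \<Rightarrow> nat \<Rightarrow> nat" where
  "conjp l i = length (filter (\<lambda>p. i \<le> p) l)"

definition dlen :: "nat list \<Rightarrow> nat" where
  "dlen l = length (filter (\<lambda>i. i + 1 \<le> l ! i) [0..<length l])"

text \<open>x(lambda) = (a_{p_1+1},...,a_{p_d+1}), p_i = lambda_i - i.\<close>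
definition xpt :: "(int \<Rightarrow> complex) \<Rightarrow> nat list \<Rightarrow> complex list" where
  "xpt a l = map (\<lambda>i. a (int (l ! i) - int (i + 1) + 1)) [0..<dlen l]"

text \<open>y(lambda) = (hat a_{q_1+1},...), q_i = lambda'_i - i, hat a_j = - a_{1-j}.\<close>
definition ypt :: "(int \<Rightarrow> complex) \<Rightarrow> nat list \<Rightarrow> complex list" where
  "ypt a l = map (\<lambda>i. - a (1 - (int (conjp l (i + 1)) - int (i + 1) + 1))) [0..<dlen l]"

definition psum :: "complex list \<Rightarrow> complex list \<Rightarrow> nat \<Rightarrow> complex" where
  "psum xs ys k = (\<Sum>x\<leftarrow>xs. x ^ k) + (-1) ^ (k - 1) * (\<Sum>y\<leftarrow>ys. y ^ k)"

definition evalL :: "symfun \<Rightarrow> complex list \<Rightarrow> complex list \<Rightarrow> complex" where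
  "evalL f xs ys = (\<Sum>m\<in>Poly_Mapping.keys f. Poly_Mapping.lookup f m * (\<Prod>i\<in>Poly_Mapping.keys m. psum xs ys (i + 1) ^ Poly_Mapping.lookup m i))"

end

(*
  Evaluated at (x(lambda); y(lambda)), every entry h_{mu_i - i + j; tau^(-j) a} of the
  Jacobi-Trudi determinant s_{mu;a} is a coefficient of a rational function, and a partial
  fraction identity turns it into a sum over its poles Z, the points of x(lambda) together with
  a_0, ..., a_(-N) (N = length mu): the entry is sum_z R_i(z) psi_j(z), where
  psi_j(z) = (z - a_0)...(z - a_(1-j)) and R_i vanishes at a_w for -N <= w <= mu_i - i - 1
  and at the negatives of the points of y(lambda).  So the evaluated matrix factors as R V
  through |Z| dimensions.  If mu is not contained in lambda, some r + 1 rows of R are supported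
  on at most r columns and the determinant vanishes.  For mu = lambda, R vanishes outside the
  N columns of the poles a_(lambda_v - v), is triangular with nonzero diagonal on them, and
  det [psi_j(z_v)] is a nonzero Vandermonde-type determinant.  Evaluating
  f = sum c(mu) s_{mu;a} at (x(lambda); y(lambda)) therefore only sees mu contained in lambda,
  which gives the recursion; at (0; 0) only mu = [] survives.
*)

theory Submission
  imports Defs "HOL-Computational_Algebra.Formal_Power_Series"
begin

no_notation vec_index (infixl \<open>$\<close> 100)
notation fps_nth (infixl \<open>$\<close> 75)

section \<open>Evaluation at a pair of point lists\<close>

definition eval_monom :: "complex list \<Rightarrow> complex list \<Rightarrow> (nat \<Rightarrow>\<^sub>0 nat) \<Rightarrow> complex" where
  "eval_monom xs ys m = (\<Prod>i\<in>Poly_Mapping.keys m. psum xs ys (i + 1) ^ Poly_Mapping.lookup m i)"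

lemma eval_monom_superset:
  assumes "finite K" "Poly_Mapping.keys m \<subseteq> K"
  shows "eval_monom xs ys m = (\<Prod>i\<in>K. psum xs ys (i + 1) ^ Poly_Mapping.lookup m i)"
  unfolding eval_monom_def
  by (rule prod.mono_neutral_left) (use assms in \<open>auto simp: in_keys_iff\<close>)

lemma eval_monom_add: "eval_monom xs ys (m + m') = eval_monom xs ys m * eval_monom xs ys m'"
proof -
  let ?K = "Poly_Mapping.keys m \<union> Poly_Mapping.keys m'"
  have K: "finite ?K" by simp
  have "eval_monom xs ys (m + m') =
      (\<Prod>i\<in>?K. psum xs ys (i + 1) ^ Poly_Mapping.lookup m i * psum xs ys (i + 1) ^ Poly_Mapping.lookup m' i)"
    by (simp only: eval_monom_superset[OF K keys_add] lookup_add power_add)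
  also have "\<dots> = eval_monom xs ys m * eval_monom xs ys m'"
    by (simp add: prod.distrib eval_monom_superset[OF K])
  finally show ?thesis .
qed

lemma evalL_eq_sum_monoms:
  "evalL f xs ys = (\<Sum>m\<in>Poly_Mapping.keys f. Poly_Mapping.lookup f m * eval_monom xs ys m)"
  unfolding evalL_def eval_monom_def ..

lemma evalL_superset:
  assumes "finite K" "Poly_Mapping.keys f \<subseteq> K"
  shows "evalL f xs ys = (\<Sum>m\<in>K. Poly_Mapping.lookup f m * eval_monom xs ys m)"
  unfolding evalL_eq_sum_monoms
  by (rule sum.mono_neutral_left) (use assms in \<open>auto simp: in_keys_iff\<close>)

lemma evalL_add: "evalL (f + g) xs ys = evalL f xs ys + evalL g xs ys"
proof -
  let ?K = "Poly_Mapping.keys f \<union> Poly_Mapping.keys g"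
  have K: "finite ?K" by simp
  show ?thesis
    using keys_add[of f g]
    by (simp add: evalL_superset[OF K] lookup_add sum.distrib algebra_simps)
qed

lemma evalL_single: "evalL (Poly_Mapping.single m c) xs ys = c * eval_monom xs ys m"
  by (simp add: evalL_eq_sum_monoms)

lemma evalL_zero: "evalL 0 xs ys = 0"
  by (simp add: evalL_def)

lemma evalL_sum: "evalL (\<Sum>i\<in>I. F i) xs ys = (\<Sum>i\<in>I. evalL (F i) xs ys)"
  by (induction I rule: infinite_finite_induct) (auto simp: evalL_add evalL_zero)

lemma evalL_mult: "evalL (f * g) xs ys = evalL f xs ys * evalL g xs ys"
proof -
  have sum_single: "h = (\<Sum>m\<in>Poly_Mapping.keys h. Poly_Mapping.single m (Poly_Mapping.lookup h m))"
    for h :: symfun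
    by (rule poly_mapping_eqI)
       (auto simp: lookup_sum lookup_single when_def in_keys_iff sum.delta)
  have "f * g = (\<Sum>m\<in>Poly_Mapping.keys f. \<Sum>m'\<in>Poly_Mapping.keys g.
      Poly_Mapping.single (m + m') (Poly_Mapping.lookup f m * Poly_Mapping.lookup g m'))"
    by (subst sum_single[of f], subst sum_single[of g])
       (simp add: sum_distrib_left sum_distrib_right mult_single sum.swap[of _ "Poly_Mapping.keys g"])
  then have "evalL (f * g) xs ys = (\<Sum>m\<in>Poly_Mapping.keys f. \<Sum>m'\<in>Poly_Mapping.keys g.
      Poly_Mapping.lookup f m * Poly_Mapping.lookup g m' * (eval_monom xs ys m * eval_monom xs ys m'))"
    by (simp add: evalL_sum evalL_single eval_monom_add)
  also have "\<dots> = evalL f xs ys * evalL g xs ys"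
    by (simp add: evalL_eq_sum_monoms sum_product algebra_simps)
  finally show ?thesis .
qed

lemma evalL_one: "evalL 1 xs ys = 1"
  by (simp add: evalL_def)

interpretation evalL_hom: comm_ring_hom "\<lambda>f. evalL f xs ys"
  by unfold_locales (auto simp: evalL_add evalL_mult evalL_one evalL_zero)

lemma evalL_constL [simp]: "evalL (constL c) xs ys = c"
  by (simp add: constL_def evalL_single eval_monom_def)

lemma evalL_pvar: "k \<ge> 1 \<Longrightarrow> evalL (pvar k) xs ys = psum xs ys k"
  by (simp add: pvar_def evalL_single eval_monom_def)

section \<open>Generating function of the complete symmetric functions\<close>

lemma subsets_card_Suc_insert:
  assumes "finite A" "x \<notin> A"
  shows "{S. S \<subseteq> insert x A \<and> card S = Suc k} =
    {S. S \<subseteq> A \<and> card S = Suc k} \<union> insert x ` {S. S \<subseteq> A \<and> card S = k}"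
proof (intro equalityI subsetI)
  fix S assume "S \<in> {S. S \<subseteq> insert x A \<and> card S = Suc k}"
  then have S: "S \<subseteq> insert x A" "card S = Suc k" "finite S"
    using assms(1) finite_subset by auto
  show "S \<in> {S. S \<subseteq> A \<and> card S = Suc k} \<union> insert x ` {S. S \<subseteq> A \<and> card S = k}"
  proof (cases "x \<in> S")
    case True
    then have "S = insert x (S - {x})" "S - {x} \<in> {S. S \<subseteq> A \<and> card S = k}"
      using S by auto
    then show ?thesis by blast
  qed (use S in auto)
next
  fix S assume "S \<in> {S. S \<subseteq> A \<and> card S = Suc k} \<union> insert x ` {S. S \<subseteq> A \<and> card S = k}"
  then show "S \<in> {S. S \<subseteq> insert x A \<and> card S = Suc k}"
  proof
    assume "S \<in> insert x ` {S. S \<subseteq> A \<and> card S = k}"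
    then obtain T where T: "T \<subseteq> A" "card T = k" "S = insert x T" by auto
    moreover have "finite T" "x \<notin> T"
      using T(1) assms finite_subset by auto
    ultimately show ?thesis by auto
  qed auto
qed

lemma sum_prod_subsets_insert:
  fixes f :: "'a \<Rightarrow> 'b::comm_semiring_1"
  assumes "finite A" "x \<notin> A"
  shows "(\<Sum>S | S \<subseteq> insert x A \<and> card S = Suc k. prod f S) =
    (\<Sum>S | S \<subseteq> A \<and> card S = Suc k. prod f S) + f x * (\<Sum>S | S \<subseteq> A \<and> card S = k. prod f S)"
proof -
  let ?S = "\<lambda>k. {S. S \<subseteq> A \<and> card S = k}"
  have fin: "finite (?S k)" for k
    by (rule finite_subset[of _ "Pow A"]) (use assms(1) in auto)
  have inj: "inj_on (insert x) (?S k)"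
  proof (rule inj_onI)
    fix S T assume "S \<in> ?S k" "T \<in> ?S k" "insert x S = insert x T"
    moreover have "x \<notin> S" "x \<notin> T"
      using calculation(1,2) assms(2) by auto
    ultimately show "S = T" by (metis insert_ident)
  qed
  have "(\<Sum>S\<in>insert x ` ?S k. prod f S) = (\<Sum>S\<in>?S k. prod f (insert x S))"
    by (rule sum.reindex[OF inj, unfolded comp_def])
  also have "\<dots> = f x * (\<Sum>S\<in>?S k. prod f S)"
    unfolding sum_distrib_left
  proof (rule sum.cong[OF refl])
    fix S assume "S \<in> ?S k"
    then have "finite S" "x \<notin> S"
      using assms finite_subset by auto
    then show "prod f (insert x S) = f x * prod f S" by simp
  qed
  finally have "(\<Sum>S\<in>insert x ` ?S k. prod f S) = f x * (\<Sum>S\<in>?S k. prod f S)" .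
  moreover have "?S (Suc k) \<inter> insert x ` ?S k = {}"
    using assms(2) by auto
  ultimately show ?thesis
    by (simp add: subsets_card_Suc_insert[OF assms] sum.union_disjoint fin)
qed

lemma esym_0 [simp]: "esym 0 xs = 1"
proof -
  have "S = {}" if "S \<subseteq> {..<length xs}" "card S = 0" for S
    using that finite_subset[OF that(1)] by simp
  then have "{S. S \<subseteq> {..<length xs} \<and> card S = 0} = {{}}"
    by auto
  then show ?thesis unfolding esym_def by simp
qed

lemma esym_eq_0:
  assumes "length xs < j"
  shows "esym j xs = 0"
proof -
  have E: "{S. S \<subseteq> {..<length xs} \<and> card S = j} = {}"
  proof (rule equals0I)
    fix S assume "S \<in> {S. S \<subseteq> {..<length xs} \<and> card S = j}"
    then have "card S \<le> length xs" "card S = j"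
      using card_mono[OF finite_lessThan, of S "length xs"] by auto
    with assms show False by simp
  qed
  show ?thesis unfolding esym_def E by simp
qed

lemma esym_Suc_snoc: "esym (Suc j) (xs @ [x]) = esym (Suc j) xs + x * esym j xs"
proof -
  let ?n = "length xs"
  have nth: "(\<Prod>i\<in>S. (xs @ [x]) ! i) = (\<Prod>i\<in>S. xs ! i)" if "S \<subseteq> {..<?n}" for S
    using that by (intro prod.cong) (auto simp: nth_append)
  have "esym (Suc j) (xs @ [x]) =
      (\<Sum>S | S \<subseteq> insert ?n {..<?n} \<and> card S = Suc j. \<Prod>i\<in>S. (xs @ [x]) ! i)"
    by (simp add: esym_def lessThan_Suc)
  also have "\<dots> = (\<Sum>S | S \<subseteq> {..<?n} \<and> card S = Suc j. \<Prod>i\<in>S. (xs @ [x]) ! i)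
      + (xs @ [x]) ! ?n * (\<Sum>S | S \<subseteq> {..<?n} \<and> card S = j. \<Prod>i\<in>S. (xs @ [x]) ! i)"
    by (rule sum_prod_subsets_insert) auto
  also have "\<dots> = esym (Suc j) xs + x * esym j xs"
    by (simp add: esym_def nth)
  finally show ?thesis .
qed

definition lin_fps :: "complex \<Rightarrow> complex fps" where
  "lin_fps b = 1 - fps_const b * fps_X"

definition geom_fps :: "complex \<Rightarrow> complex fps" where
  "geom_fps x = Abs_fps (\<lambda>k. x ^ k)"

lemma lin_fps_nth_0 [simp]: "lin_fps b $ 0 = 1"
  by (simp add: lin_fps_def)

lemma geom_fps_nth_0 [simp]: "geom_fps x $ 0 = 1"
  by (simp add: geom_fps_def)

lemma mult_lin_fps_nth: "(F * lin_fps b) $ k = F $ k - b * (if k = 0 then 0 else F $ (k - 1))"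
proof -
  have "F * lin_fps b = F - fps_const b * (fps_X * F)"
    by (simp add: lin_fps_def algebra_simps)
  then show ?thesis by (simp add: fps_X_mult_nth)
qed

lemma geom_fps_mult_lin_fps: "geom_fps x * lin_fps x = 1"
proof (rule fps_ext)
  fix n show "(geom_fps x * lin_fps x) $ n = 1 $ n"
    by (cases n) (auto simp: mult_lin_fps_nth geom_fps_def)
qed

lemma prod_lin_fps_nth: "prod_list (map lin_fps bs) $ k = (-1) ^ k * esym k bs"
proof (induction bs arbitrary: k rule: rev_induct)
  case Nil
  then show ?case
    by (cases k) (auto simp: esym_eq_0)
next
  case (snoc b bs)
  have "prod_list (map lin_fps (bs @ [b])) = prod_list (map lin_fps bs) * lin_fps b"
    by simp
  then show ?case
    by (cases k) (simp_all only: mult_lin_fps_nth snoc.IH esym_Suc_snoc, simp_all add: algebra_simps)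
qed

text \<open>The generating function \<open>\<Sum>\<^sub>k h\<^sub>k(x;y) t\<^sup>k = \<Prod>\<^sub>j (1 + y\<^sub>j t) / \<Prod>\<^sub>i (1 - x\<^sub>i t)\<close>;
  it is characterised by its logarithmic derivative, whose coefficients are the power sums.\<close>

definition h_genfun :: "complex list \<Rightarrow> complex list \<Rightarrow> complex fps" where
  "h_genfun xs ys = prod_list (map (\<lambda>y. lin_fps (- y)) ys) * prod_list (map geom_fps xs)"

definition has_log_deriv :: "complex fps \<Rightarrow> complex fps \<Rightarrow> bool" where
  "has_log_deriv F P \<longleftrightarrow> fps_X * fps_deriv F = P * F"

definition psum_fps :: "complex list \<Rightarrow> complex list \<Rightarrow> complex fps" where
  "psum_fps xs ys = Abs_fps (\<lambda>k. if k = 0 then 0 else psum xs ys k)"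

lemma psum_fps_Nil_Nil: "psum_fps [] [] = 0"
  by (rule fps_ext) (simp add: psum_fps_def psum_def)

lemma has_log_deriv_one: "has_log_deriv 1 0"
  by (simp add: has_log_deriv_def)

lemma has_log_deriv_mult:
  assumes "has_log_deriv F P" "has_log_deriv G Q"
  shows "has_log_deriv (F * G) (P + Q)"
proof -
  have "fps_X * fps_deriv (F * G) = F * (fps_X * fps_deriv G) + (fps_X * fps_deriv F) * G"
    by (simp add: algebra_simps)
  also have "\<dots> = (P + Q) * (F * G)"
    using assms by (simp add: has_log_deriv_def algebra_simps)
  finally show ?thesis unfolding has_log_deriv_def .
qed

lemma has_log_deriv_geom_fps: "has_log_deriv (geom_fps x) (psum_fps [x] [])"
  unfolding has_log_deriv_def
proof (rule fps_ext)
  fix n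
  have "psum_fps [x] [] = Abs_fps (\<lambda>k. if k = 0 then 0 else x ^ k)"
    by (rule fps_ext) (simp add: psum_fps_def psum_def)
  then have "(psum_fps [x] [] * geom_fps x) $ n = (\<Sum>i=0..n. (if i = 0 then 0 else x ^ i) * x ^ (n - i))"
    by (simp add: fps_mult_nth geom_fps_def)
  also have "\<dots> = (\<Sum>i\<in>{1..n}. x ^ n)"
    by (rule sum.mono_neutral_cong_right) (auto simp: power_add[symmetric])
  finally show "(fps_X * fps_deriv (geom_fps x)) $ n = (psum_fps [x] [] * geom_fps x) $ n"
    by (cases n) (simp_all add: geom_fps_def)
qed

lemma has_log_deriv_lin_fps: "has_log_deriv (lin_fps (- y)) (psum_fps [] [y])"
  unfolding has_log_deriv_def
proof (rule fps_ext)
  fix n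
  show "(fps_X * fps_deriv (lin_fps (- y))) $ n = (psum_fps [] [y] * lin_fps (- y)) $ n"
  proof (cases n)
    case (Suc m)
    then show ?thesis
      by (cases m) (simp_all add: mult_lin_fps_nth psum_fps_def psum_def, simp_all add: lin_fps_def)
  qed (simp add: psum_fps_def)
qed

lemma psum_fps_append:
  "psum_fps (xs @ xs') (ys @ ys') = psum_fps xs ys + psum_fps xs' ys'"
  by (rule fps_ext) (simp add: psum_fps_def psum_def algebra_simps)

lemma has_log_deriv_h_genfun: "has_log_deriv (h_genfun xs ys) (psum_fps xs ys)"
proof -
  have X: "has_log_deriv (prod_list (map geom_fps xs)) (psum_fps xs [])"
  proof (induction xs)
    case (Cons x xs)
    then show ?case
      using has_log_deriv_mult[OF has_log_deriv_geom_fps Cons.IH] psum_fps_append[of "[x]" xs "[]" "[]"]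
      by simp
  qed (simp add: has_log_deriv_one psum_fps_Nil_Nil)
  have Y: "has_log_deriv (prod_list (map (\<lambda>y. lin_fps (- y)) ys)) (psum_fps [] ys)"
  proof (induction ys)
    case (Cons y ys)
    then show ?case
      using has_log_deriv_mult[OF has_log_deriv_lin_fps Cons.IH] psum_fps_append[of "[]" "[]" "[y]" ys]
      by simp
  qed (simp add: has_log_deriv_one psum_fps_Nil_Nil)
  show ?thesis
    using has_log_deriv_mult[OF Y X] psum_fps_append[of "[]" xs ys "[]"]
    by (simp add: h_genfun_def)
qed

lemma h_genfun_nth_0 [simp]: "h_genfun xs ys $ 0 = 1"
proof -
  have "prod_list (map f l) $ 0 = prod_list (map (\<lambda>x. f x $ 0) l)" for f :: "complex \<Rightarrow> complex fps" and l
    by (induction l) auto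
  moreover have "prod_list (map (\<lambda>_. 1) l) = (1::complex)" for l :: "complex list"
    by (induction l) auto
  ultimately show ?thesis by (simp add: h_genfun_def comp_def)
qed

text \<open>Newton's identity, by which \<^const>\<open>hlist\<close> defines the \<open>h\<^sub>k\<close>.\<close>

lemma h_genfun_Suc:
  "of_nat (Suc n) * h_genfun xs ys $ Suc n = (\<Sum>i=1..Suc n. psum xs ys i * h_genfun xs ys $ (Suc n - i))"
proof -
  have "of_nat (Suc n) * h_genfun xs ys $ Suc n = (fps_X * fps_deriv (h_genfun xs ys)) $ Suc n"
    by (simp add: algebra_simps)
  also have "\<dots> = (psum_fps xs ys * h_genfun xs ys) $ Suc n"
    using has_log_deriv_h_genfun unfolding has_log_deriv_def by simp
  also have "\<dots> = (\<Sum>i=0..Suc n. (if i = 0 then 0 else psum xs ys i) * h_genfun xs ys $ (Suc n - i))"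
    by (simp add: fps_mult_nth psum_fps_def)
  also have "\<dots> = (\<Sum>i=1..Suc n. psum xs ys i * h_genfun xs ys $ (Suc n - i))"
    by (rule sum.mono_neutral_cong_right) auto
  finally show ?thesis .
qed

lemma hcomp_Suc:
  "hcomp (Suc k) = constL (1 / of_nat (Suc k)) * (\<Sum>i=1..Suc k. pvar i * hcomp (Suc k - i))"
proof -
  have length_hlist: "length (hlist k) = Suc k" for k
    by (induction k) auto
  have hlist_nth: "j \<le> k \<Longrightarrow> hlist k ! j = hcomp j" for j k
  proof (induction k)
    case (Suc k)
    then show ?case
      by (cases "j = Suc k") (simp_all add: hcomp_def nth_append length_hlist)
  qed (simp add: hcomp_def)
  have "hcomp (Suc k) = constL (1 / of_nat (Suc k)) * (\<Sum>i=1..Suc k. pvar i * (hlist k ! (Suc k - i)))"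
    by (simp add: hcomp_def nth_append length_hlist)
  also have "(\<Sum>i=1..Suc k. pvar i * (hlist k ! (Suc k - i))) = (\<Sum>i=1..Suc k. pvar i * hcomp (Suc k - i))"
    by (rule sum.cong) (auto simp: hlist_nth)
  finally show ?thesis .
qed

lemma evalL_hcomp: "evalL (hcomp k) xs ys = h_genfun xs ys $ k"
proof (induction k rule: less_induct)
  case (less k)
  show ?case
  proof (cases k)
    case 0
    then show ?thesis by (simp add: hcomp_def evalL_one)
  next
    case (Suc n)
    have "evalL (hcomp k) xs ys = 1 / of_nat (Suc n) * (\<Sum>i=1..Suc n. psum xs ys i * h_genfun xs ys $ (Suc n - i))"
      unfolding Suc hcomp_Suc evalL_mult evalL_constL evalL_sum
      by (auto intro!: sum.cong simp: evalL_mult evalL_pvar less.IH Suc)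
    also have "\<dots> = h_genfun xs ys $ k"
      unfolding h_genfun_Suc[symmetric] Suc by (simp del: of_nat_Suc)
    finally show ?thesis .
  qed
qed

definition fps_coeff_int :: "complex fps \<Rightarrow> int \<Rightarrow> complex" where
  "fps_coeff_int F k = (if k < 0 then 0 else F $ nat k)"

lemma fps_coeff_int_nonpos:
  "k \<le> 0 \<Longrightarrow> F $ 0 = 1 \<Longrightarrow> fps_coeff_int F k = (if k = 0 then 1 else 0)"
  by (simp add: fps_coeff_int_def)

lemma fps_coeff_int_lin_fps_mult:
  "fps_coeff_int (lin_fps y * F) m = fps_coeff_int F m - y * fps_coeff_int F (m - 1)"
  by (auto simp: fps_coeff_int_def mult.commute[of "lin_fps y"] mult_lin_fps_nth nat_diff_distrib)

lemma evalL_hshift: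
  "evalL (hshift k b) xs ys =
    fps_coeff_int (prod_list (map (\<lambda>m. lin_fps (b (int m))) [1..<nat k]) * h_genfun xs ys) k"
proof (cases "k \<ge> 1")
  case True
  let ?bs = "map (\<lambda>m. b (int m)) [1..<nat k]"
  have "evalL (hshift k b) xs ys =
      (\<Sum>i=1..nat k. (-1) ^ (nat k - i) * esym (nat k - i) ?bs * h_genfun xs ys $ i)"
    using True by (simp add: hshift_def evalL_sum evalL_mult evalL_hcomp)
  also have "\<dots> = (\<Sum>i=0..nat k. (-1) ^ (nat k - i) * esym (nat k - i) ?bs * h_genfun xs ys $ i)"
    using True by (subst sum.atLeast_Suc_atMost[of 0]) (auto simp: esym_eq_0)
  also have "\<dots> = (\<Sum>i=0..nat k. (-1) ^ i * esym i ?bs * h_genfun xs ys $ (nat k - i))"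
    by (rule sum.reindex_bij_witness[of _ "\<lambda>i. nat k - i" "\<lambda>i. nat k - i"]) auto
  also have "\<dots> = (prod_list (map lin_fps ?bs) * h_genfun xs ys) $ nat k"
    by (simp only: fps_mult_nth prod_lin_fps_nth)
  finally show ?thesis
    using True by (simp add: fps_coeff_int_def comp_def)
qed (auto simp: hshift_def fps_coeff_int_def evalL_zero evalL_one)

section \<open>Partial fractions\<close>

definition geom_prod :: "complex set \<Rightarrow> complex fps" where
  "geom_prod Z = (\<Prod>z\<in>Z. geom_fps z)"

definition lagrange_den :: "complex set \<Rightarrow> complex \<Rightarrow> complex" where
  "lagrange_den Z z = (\<Prod>z'\<in>Z - {z}. z - z')"

text \<open>The sum of the residues of \<open>z^e \<Prod>y\<in>Y. (z - y) / \<Prod>z'\<in>Z. (z - z')\<close> at its (simple) poles.\<close>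

definition lagrange_sum :: "nat \<Rightarrow> complex list \<Rightarrow> complex set \<Rightarrow> complex" where
  "lagrange_sum e Y Z = (\<Sum>z\<in>Z. z ^ e * prod_list (map (\<lambda>y. z - y) Y) / lagrange_den Z z)"

lemma geom_prod_nth_0 [simp]: "geom_prod Z $ 0 = 1"
  by (induction Z rule: infinite_finite_induct) (auto simp: geom_prod_def)

lemma lagrange_den_nonzero: "finite Z \<Longrightarrow> lagrange_den Z z \<noteq> 0"
  by (simp add: lagrange_den_def)

lemma lagrange_den_remove:
  assumes "finite Z" "w \<in> Z" "z \<in> Z" "z \<noteq> w"
  shows "lagrange_den Z z = (z - w) * lagrange_den (Z - {w}) z"
proof -
  have "Z - {z} = insert w (Z - {w} - {z})"
    using assms by auto
  then show ?thesis
    using assms by (simp add: lagrange_den_def)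
qed

lemma lagrange_sum_Suc_remove:
  assumes "finite Z" "w \<in> Z"
  shows "lagrange_sum (Suc e) [] Z = lagrange_sum e [] (Z - {w}) + w * lagrange_sum e [] Z"
proof -
  have "lagrange_sum (Suc e) [] Z - w * lagrange_sum e [] Z = (\<Sum>z\<in>Z. z ^ e * (z - w) / lagrange_den Z z)"
    by (simp add: lagrange_sum_def sum_distrib_left sum_subtractf[symmetric] algebra_simps
        diff_divide_distrib)
  also have "\<dots> = (\<Sum>z\<in>Z - {w}. z ^ e * (z - w) / lagrange_den Z z)"
    using assms by (intro sum.mono_neutral_right) auto
  also have "\<dots> = lagrange_sum e [] (Z - {w})"
    unfolding lagrange_sum_def
    by (rule sum.cong[OF refl]) (use assms lagrange_den_remove in auto)
  finally show ?thesis by (simp add: algebra_simps)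
qed

lemma geom_prod_coeff_remove:
  assumes "finite Z" "w \<in> Z"
  shows "fps_coeff_int (geom_prod Z) m =
    fps_coeff_int (geom_prod (Z - {w})) m + w * fps_coeff_int (geom_prod Z) (m - 1)"
proof -
  have "geom_prod Z = geom_fps w * geom_prod (Z - {w})"
    using assms by (simp add: geom_prod_def prod.remove)
  then have "lin_fps w * geom_prod Z = geom_prod (Z - {w})"
    using geom_fps_mult_lin_fps by (metis mult.assoc mult.commute mult_1)
  then show ?thesis
    using fps_coeff_int_lin_fps_mult[of w "geom_prod Z" m] by simp
qed

text \<open>Both sides satisfy the same recursion in \<open>e\<close>; for \<open>e = 0\<close> and
  \<open>|Z| \<ge> 2\<close>, the recursion applied at two different points \<open>v \<noteq> w\<close> of \<open>Z\<close> gives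
  \<open>(w - v) \<cdot> lhs = 0\<close>.\<close>

lemma lagrange_sum_Nil:
  assumes "finite Z"
  shows "lagrange_sum e [] Z = fps_coeff_int (geom_prod Z) (int e + 1 - int (card Z))"
  using assms
proof (induction Z arbitrary: e rule: finite_remove_induct)
  case empty
  then show ?case by (simp add: lagrange_sum_def fps_coeff_int_def geom_prod_def)
next
  case (remove Z)
  obtain w where w: "w \<in> Z" using remove.hyps(2) by blast
  have card_remove: "card (Z - {v}) = card Z - 1" "card Z \<ge> 1" if "v \<in> Z" for v
    using that remove.hyps(1) by (auto simp: card_gt_0_iff Suc_le_eq)
  have base: "lagrange_sum 0 [] Z = fps_coeff_int (geom_prod Z) (1 - int (card Z))"
  proof (cases "card Z = 1")
    case True
    then have "Z = {w}" using w card_1_singletonE by blast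
    then show ?thesis by (simp add: lagrange_sum_def lagrange_den_def fps_coeff_int_def geom_prod_def)
  next
    case False
    then have two: "card Z \<ge> 2" using card_remove[OF w] by simp
    then have "Z - {w} \<noteq> {}" using card_remove[OF w] by force
    then obtain v where v: "v \<in> Z" "v \<noteq> w" by blast
    have "(w - v) * lagrange_sum 0 [] Z = lagrange_sum 0 [] (Z - {v}) - lagrange_sum 0 [] (Z - {w})"
      using lagrange_sum_Suc_remove[OF remove.hyps(1) w, of 0]
        lagrange_sum_Suc_remove[OF remove.hyps(1) v(1), of 0]
      by (simp add: algebra_simps)
    also have "\<dots> = 0"
      using remove.IH[OF v(1), of 0] remove.IH[OF w, of 0] card_remove[OF v(1)] card_remove[OF w] two
      by (simp add: fps_coeff_int_nonpos)
    finally have "lagrange_sum 0 [] Z = 0" using v by simp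
    with two show ?thesis by (simp add: fps_coeff_int_def)
  qed
  show ?case
  proof (induction e)
    case (Suc e)
    then show ?case
      using lagrange_sum_Suc_remove[OF remove.hyps(1) w, of e] remove.IH[OF w, of e]
        geom_prod_coeff_remove[OF remove.hyps(1) w, of "int (Suc e) + 1 - int (card Z)"]
        card_remove[OF w]
      by (simp add: algebra_simps of_nat_diff)
  qed (use base in simp)
qed

lemma lagrange_sum_Cons: "lagrange_sum e (y # Y) Z = lagrange_sum (Suc e) Y Z - y * lagrange_sum e Y Z"
  by (simp add: lagrange_sum_def sum_distrib_left sum_subtractf[symmetric] algebra_simps diff_divide_distrib)

theorem lagrange_sum_eq_coeff:
  assumes "finite Z"
  shows "lagrange_sum e Y Z =
    fps_coeff_int (prod_list (map lin_fps Y) * geom_prod Z) (int e + int (length Y) + 1 - int (card Z))"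
proof (induction Y arbitrary: e)
  case Nil
  then show ?case using lagrange_sum_Nil[OF assms] by simp
next
  case (Cons y Y)
  let ?m = "int e + int (length (y # Y)) + 1 - int (card Z)"
  have "lagrange_sum e (y # Y) Z = lagrange_sum (Suc e) Y Z - y * lagrange_sum e Y Z"
    by (rule lagrange_sum_Cons)
  also have "\<dots> = fps_coeff_int (prod_list (map lin_fps Y) * geom_prod Z) ?m
      - y * fps_coeff_int (prod_list (map lin_fps Y) * geom_prod Z) (?m - 1)"
    by (simp add: Cons.IH algebra_simps)
  also have "\<dots> = fps_coeff_int (prod_list (map lin_fps (y # Y)) * geom_prod Z) ?m"
    by (simp only: fps_coeff_int_lin_fps_mult list.map prod_list.Cons mult.assoc)
  finally show ?case .
qed

section \<open>Frobenius coordinates\<close>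

lemma filter_upt_eq_upt:
  assumes "\<And>i j. i \<le> j \<Longrightarrow> j < n \<Longrightarrow> P j \<Longrightarrow> P i"
  shows "filter P [0..<n] = [0..<length (filter P [0..<n])]"
  using assms
proof (induction n)
  case (Suc n)
  have IH: "filter P [0..<n] = [0..<length (filter P [0..<n])]"
    using Suc.prems by (intro Suc.IH) auto
  show ?case
  proof (cases "P n")
    case True
    then have "filter P [0..<n] = [0..<n]"
      using Suc.prems[of _ n] by (simp add: filter_id_conv)
    then show ?thesis using True by simp
  qed (use IH in simp)
qed simp

lemma partition_nth_antimono: "is_partition l \<Longrightarrow> i \<le> j \<Longrightarrow> j < length l \<Longrightarrow> l ! j \<le> l ! i"
  unfolding is_partition_def
  by (metis le_neq_implies_less order.refl sorted_wrt_iff_nth_less)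

lemma partition_nth_pos: "is_partition l \<Longrightarrow> i < length l \<Longrightarrow> 0 < l ! i"
  unfolding is_partition_def by auto

lemma less_dlen_iff:
  assumes "is_partition l"
  shows "i < dlen l \<longleftrightarrow> i < length l \<and> i + 1 \<le> l ! i"
proof -
  let ?P = "\<lambda>i. i + 1 \<le> l ! i"
  have "?P i" if "i \<le> j" "j < length l" "?P j" for i j
    using partition_nth_antimono[OF assms that(1,2)] that(1,3) by simp
  then have "filter ?P [0..<length l] = [0..<dlen l]"
    unfolding dlen_def by (rule filter_upt_eq_upt)
  then have "i < dlen l \<longleftrightarrow> i \<in> set (filter ?P [0..<length l])"
    by simp
  then show ?thesis by simp
qed

lemma dlen_le_length: "dlen l \<le> length l"
  unfolding dlen_def by (metis length_filter_le length_upt minus_nat.diff_0)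

lemma less_conjp_iff:
  assumes "is_partition l"
  shows "i < conjp l c \<longleftrightarrow> i < length l \<and> c \<le> l ! i"
proof -
  let ?P = "\<lambda>i. c \<le> l ! i"
  have "filter (\<lambda>p. c \<le> p) (map ((!) l) [0..<length l]) = map ((!) l) (filter ?P [0..<length l])"
    by (simp add: filter_map comp_def)
  then have conjp: "conjp l c = length (filter ?P [0..<length l])"
    by (simp add: conjp_def map_nth)
  have "?P i" if "i \<le> j" "j < length l" "?P j" for i j
    using partition_nth_antimono[OF assms that(1,2)] that(3) by simp
  then have "filter ?P [0..<length l] = [0..<conjp l c]"
    unfolding conjp by (rule filter_upt_eq_upt)
  then have "i < conjp l c \<longleftrightarrow> i \<in> set (filter ?P [0..<length l])"
    by simp
  then show ?thesis by simp
qed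

lemma conjp_antimono:
  assumes l: "is_partition l" and "c \<le> c'"
  shows "conjp l c' \<le> conjp l c"
proof -
  have "i < conjp l c" if "i < conjp l c'" for i
    using that less_conjp_iff[OF l] assms(2) by auto
  then show ?thesis using not_le by blast
qed

lemma conjp_eq:
  assumes l: "is_partition l" and v: "v < length l" "l ! v < c" and c: "\<And>i. i < v \<Longrightarrow> c \<le> l ! i"
  shows "conjp l c = v"
proof -
  have "i < conjp l c \<longleftrightarrow> i < v" for i
  proof (cases "i < v")
    case False
    then have "i < length l \<Longrightarrow> l ! i < c"
      using partition_nth_antimono[OF l, of v i] v by simp
    then show ?thesis using less_conjp_iff[OF l] False by auto
  qed (use less_conjp_iff[OF l] c v in auto)
  then show ?thesis
    using less_irrefl nat_neq_iff by metis
qed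

definition frob_q :: "nat list \<Rightarrow> nat \<Rightarrow> int" where
  "frob_q l t = int (conjp l (t + 1)) - int (t + 1)"

lemma frob_q_nonneg:
  assumes l: "is_partition l" and t: "t < dlen l"
  shows "frob_q l t \<ge> 0"
proof -
  have "t < length l" "t + 1 \<le> l ! t"
    using less_dlen_iff[OF l] t by auto
  then have "t < conjp l (t + 1)"
    using less_conjp_iff[OF l] by simp
  then show ?thesis unfolding frob_q_def by simp
qed

lemma frob_q_strict_antimono:
  assumes "is_partition l" "t < t'"
  shows "frob_q l t' < frob_q l t"
  using conjp_antimono[OF assms(1), of "t + 1" "t' + 1"] assms(2) unfolding frob_q_def by simp

lemma length_xpt [simp]: "length (xpt a l) = dlen l"
  by (simp add: xpt_def)

lemma xpt_nth: "i < dlen l \<Longrightarrow> xpt a l ! i = a (int (l ! i) - int i)"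
  by (simp add: xpt_def)

lemma ypt_eq: "ypt a l = map (\<lambda>t. - a (- frob_q l t)) [0..<dlen l]"
  by (simp add: ypt_def frob_q_def algebra_simps)

text \<open>The shifted part of row \<open>i\<close> (counted from \<open>0\<close>) is \<open>\<lambda>\<^sub>i - i\<close>.\<close>

lemma shifted_part_strict_antimono:
  assumes "is_partition l" "i < j" "j < length l"
  shows "int (l ! j) - int j < int (l ! i) - int i"
proof -
  have "l ! j \<le> l ! i"
    using partition_nth_antimono[OF assms(1)] assms(2,3) by simp
  then show ?thesis using assms(2) by simp
qed

lemma shifted_part_pos_iff:
  assumes "is_partition l" "i < length l"
  shows "0 < int (l ! i) - int i \<longleftrightarrow> i < dlen l"
  using less_dlen_iff[OF assms(1), of i] assms(2) by (simp add: Suc_le_eq)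

lemma distinct_xpt:
  assumes "inj a" "is_partition l"
  shows "distinct (xpt a l)"
proof -
  have "inj_on (\<lambda>i. a (int (l ! i) - int i)) {0..<dlen l}"
  proof (rule inj_onI)
    fix i j assume ij: "i \<in> {0..<dlen l}" "j \<in> {0..<dlen l}"
      and "a (int (l ! i) - int i) = a (int (l ! j) - int j)"
    then have eq: "int (l ! i) - int i = int (l ! j) - int j"
      using assms(1) by (simp add: inj_eq)
    have "i < length l" "j < length l"
      using ij dlen_le_length[of l] by auto
    show "i = j"
    proof (rule ccontr)
      assume "i \<noteq> j"
      then have "i < j \<or> j < i" by auto
      then show False
        using eq shifted_part_strict_antimono[OF assms(2)] \<open>i < length l\<close> \<open>j < length l\<close>
        by fastforce
    qed
  qed
  then show ?thesis
    unfolding xpt_def by (simp add: distinct_map)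
qed

text \<open>The two halves of the Frobenius complement: the integers \<open>\<lambda>\<^sub>v - v\<close> (\<open>v\<close> off the diagonal)
  and \<open>-q\<^sub>t\<close> are disjoint and together fill the range \<open>[\<lambda>\<^sub>i - i, 0]\<close>.\<close>

lemma shifted_part_ne_frob_q:
  assumes l: "is_partition l" and v: "dlen l \<le> v" "v < length l" and t: "t < dlen l"
  shows "int (l ! v) - int v \<noteq> - frob_q l t"
proof
  assume eq: "int (l ! v) - int v = - frob_q l t"
  show False
  proof (cases "t + 1 \<le> l ! v")
    case True
    then have "v < conjp l (t + 1)" using less_conjp_iff[OF l] v by simp
    then show False using eq True unfolding frob_q_def by simp
  next
    case False
    then have "\<not> v < conjp l (t + 1)" using less_conjp_iff[OF l] v by simp
    then show False using eq False unfolding frob_q_def by simp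
  qed
qed

lemma shifted_part_or_frob_q:
  assumes l: "is_partition l" and i: "dlen l \<le> i" "i < length l"
    and q: "0 \<le> q" "q \<le> int i - int (l ! i)"
  shows "(\<exists>t<dlen l. frob_q l t = q) \<or> (\<exists>v. dlen l \<le> v \<and> v \<le> i \<and> int v - int (l ! v) = q)"
proof -
  let ?d = "dlen l"
  let ?V = "{v. ?d \<le> v \<and> v \<le> i \<and> q \<le> int v - int (l ! v)}"
  have fin: "finite ?V" by (rule finite_subset[of _ "{..i}"]) auto
  have "i \<in> ?V" using i q by auto
  then obtain v where "v \<in> ?V" and vmin: "\<And>w. w \<in> ?V \<Longrightarrow> v \<le> w"
    using Min_in[OF fin] Min_le[OF fin] by blast
  then have vd: "?d \<le> v" "v \<le> i" "q \<le> int v - int (l ! v)" and vl: "v < length l"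
    using i by auto
  show ?thesis
  proof (cases "int v - int (l ! v) = q")
    case False
    define c where "c = nat (int v - q)"
    have c: "int c = int v - q" "l ! v < c" "1 \<le> c" "c \<le> v"
      using False vd q partition_nth_pos[OF l vl] unfolding c_def by auto
    have above: "c \<le> l ! j" if "j < v" for j
    proof (cases "?d < v")
      case True
      then have "v - 1 \<notin> ?V"
        using vmin[of "v - 1"] by fastforce
      then have "int (v - 1) - int (l ! (v - 1)) < q"
        using True vd by auto
      then have "c \<le> l ! (v - 1)" using c True by linarith
      moreover have "l ! (v - 1) \<le> l ! j"
        using partition_nth_antimono[OF l, of j "v - 1"] that vl by simp
      ultimately show ?thesis by simp
    next
      case False
      then have "v = ?d" "?d - 1 < ?d" using vd c by auto
      then have "?d \<le> l ! (?d - 1)" using less_dlen_iff[OF l, of "?d - 1"] by simp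
      moreover have "j \<le> ?d - 1" "?d - 1 < length l" using that vl \<open>v = ?d\<close> by auto
      then have "l ! (?d - 1) \<le> l ! j" using partition_nth_antimono[OF l] by blast
      ultimately show ?thesis using c \<open>v = ?d\<close> by simp
    qed
    have "c - 1 < ?d"
      using less_dlen_iff[OF l, of "c - 1"] above[of "c - 1"] c vl by simp
    moreover have "frob_q l (c - 1) = q"
      using conjp_eq[OF l vl c(2) above] c unfolding frob_q_def by simp
    ultimately show ?thesis by blast
  qed (use vd in blast)
qed

lemma not_subdiag_witness:
  assumes "is_partition mu" "\<not> subdiag mu l"
  shows "\<exists>r<length mu. (if r < length l then l ! r else 0) < mu ! r"
proof (cases "length mu \<le> length l")
  case True
  then obtain i where "i < length mu" "\<not> mu ! i \<le> l ! i"
    using assms(2) unfolding subdiag_def by auto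
  then show ?thesis using True by (intro exI[of _ i]) auto
next
  case False
  then show ?thesis
    using partition_nth_pos[OF assms(1)] by (intro exI[of _ "length l"]) auto
qed

section \<open>Factorisation of the evaluated Jacobi--Trudi matrix\<close>

definition pole_list :: "(int \<Rightarrow> complex) \<Rightarrow> nat list \<Rightarrow> nat \<Rightarrow> complex list" where
  "pole_list a l N = xpt a l @ map (\<lambda>q. a (- int q)) [0..<N + 1]"

definition newton_basis :: "(int \<Rightarrow> complex) \<Rightarrow> nat \<Rightarrow> complex \<Rightarrow> complex" where
  "newton_basis a j z = (\<Prod>w\<in>{1 - int j..0}. z - a w)"

definition entry_numer :: "(int \<Rightarrow> complex) \<Rightarrow> nat list \<Rightarrow> nat \<Rightarrow> int \<Rightarrow> complex \<Rightarrow> complex" where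
  "entry_numer a l N P z =
    (\<Prod>t<dlen l. z - a (- frob_q l t)) * (\<Prod>w\<in>{1..P}. z - a w) * (\<Prod>w\<in>{- int N..min 0 P}. z - a w)"

lemma length_pole_list: "length (pole_list a l N) = dlen l + N + 1"
  by (simp add: pole_list_def)

lemma pole_list_nth_xpt: "u < dlen l \<Longrightarrow> pole_list a l N ! u = a (int (l ! u) - int u)"
  by (simp add: pole_list_def nth_append xpt_nth)

lemma pole_list_nth_tail: "q \<le> N \<Longrightarrow> pole_list a l N ! (dlen l + q) = a (- int q)"
  by (simp add: pole_list_def nth_append)

lemma pole_list_tail_cases:
  assumes "dlen l \<le> u" "u < dlen l + N + 1"
  obtains q where "q \<le> N" "u = dlen l + q" "pole_list a l N ! u = a (- int q)"
proof -
  obtain q where "u = dlen l + q" using assms(1) le_Suc_ex by blast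
  moreover have "q \<le> N" using assms(2) calculation by simp
  ultimately show ?thesis using that pole_list_nth_tail by blast
qed

lemma distinct_pole_list:
  assumes inj: "inj a" and l: "is_partition l"
  shows "distinct (pole_list a l N)"
proof -
  have "inj_on (\<lambda>q. a (- int q)) {0..<N + 1}"
    by (rule inj_onI) (use inj in \<open>simp add: inj_eq\<close>)
  then have tail: "distinct (map (\<lambda>q. a (- int q)) [0..<N + 1])"
    by (simp only: distinct_map distinct_upt set_upt)
  have x_ne: "a (int (l ! i) - int i) \<noteq> a (- int q)" if "i < dlen l" for i q
  proof -
    have "0 < int (l ! i) - int i"
      using shifted_part_pos_iff[OF l] that dlen_le_length[of l] by simp
    then show ?thesis using inj by (auto simp: inj_eq)
  qed
  have "set (xpt a l) \<inter> set (map (\<lambda>q. a (- int q)) [0..<N + 1]) = {}"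
  proof (rule equals0I)
    fix z assume "z \<in> set (xpt a l) \<inter> set (map (\<lambda>q. a (- int q)) [0..<N + 1])"
    then obtain i q where "i < dlen l" "z = a (int (l ! i) - int i)" "z = a (- int q)"
      by (auto simp: xpt_def)
    then show False using x_ne[of i q] by simp
  qed
  then show ?thesis
    using distinct_xpt[OF inj l] tail by (simp add: pole_list_def)
qed

lemma card_pole_set:
  "inj a \<Longrightarrow> is_partition l \<Longrightarrow> card (set (pole_list a l N)) = dlen l + N + 1"
  using distinct_card[OF distinct_pole_list] by (simp add: length_pole_list)

lemma sum_pole_set:
  assumes "inj a" "is_partition l"
  shows "(\<Sum>z\<in>set (pole_list a l N). g z) = (\<Sum>u<dlen l + N + 1. g (pole_list a l N ! u))"
  using sum.distinct_set_conv_list[OF distinct_pole_list[OF assms], of g]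
  by (simp add: sum_list_sum_nth length_pole_list atLeast0LessThan)

lemma entry_numer_window: "- int N \<le> w \<Longrightarrow> w \<le> P \<Longrightarrow> entry_numer a l N P (a w) = 0"
  by (cases "w \<le> 0") (auto simp: entry_numer_def)

lemma entry_numer_frob_q: "t < dlen l \<Longrightarrow> entry_numer a l N P (a (- frob_q l t)) = 0"
  by (auto simp: entry_numer_def)

lemma entry_numer_nonzero:
  assumes "inj a" "w < - int N \<or> P < w" "\<And>t. t < dlen l \<Longrightarrow> w \<noteq> - frob_q l t"
  shows "entry_numer a l N P (a w) \<noteq> 0"
  using assms by (auto simp: entry_numer_def inj_eq)

lemma prod_int_interval_split:
  "a \<le> m + 1 \<Longrightarrow> m \<le> b \<Longrightarrow> prod f {a..b::int} = prod f {a..m} * prod f {m + 1..b}"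
  by (subst prod.union_disjoint[symmetric]) (auto intro: prod.cong)

lemma prod_int_intervals_swap:
  fixes g :: "int \<Rightarrow> 'a::comm_monoid_mult"
  assumes "- int j \<le> P" "- int N \<le> P"
  shows "prod g {1 - int j..0} * prod g {1..P} * prod g {- int N..min 0 P} =
    prod g {1 - int j..P} * prod g {- int N..0}"
proof (cases "P \<ge> 0")
  case True
  then show ?thesis
    using prod_int_interval_split[of "1 - int j" 0 P g] by simp
next
  case False
  then show ?thesis
    using prod_int_interval_split[of "1 - int j" P 0 g] prod_int_interval_split[of "- int N" P 0 g] assms
    by (simp add: algebra_simps)
qed

lemma prod_list_upto: "prod_list (map f [m..n]) = prod f {m..n}"
  by (simp add: prod.distinct_set_conv_list[symmetric])

lemma prod_list_upt_0: "prod_list (map f [0..<n]) = (\<Prod>t<n. f t)"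
  by (simp add: prod.distinct_set_conv_list[symmetric] atLeast0LessThan)

lemma set_pole_list_tail: "set (map (\<lambda>q. a (- int q)) [0..<N + 1]) = a ` {- int N..0}"
proof -
  have "(\<lambda>q. - int q) ` {0..<N + 1} = {- int N..0}"
  proof (intro equalityI subsetI)
    fix w assume "w \<in> {- int N..0}"
    then have "w = - int (nat (- w))" "nat (- w) \<in> {0..<N + 1}" by auto
    then show "w \<in> (\<lambda>q. - int q) ` {0..<N + 1}" by blast
  qed auto
  then show ?thesis
    by (simp only: set_map set_upt image_image[symmetric, of a "\<lambda>q. - int q"])
qed

lemma set_pole_list: "set (pole_list a l N) = set (xpt a l) \<union> a ` {- int N..0}"
  by (simp only: pole_list_def set_append set_pole_list_tail)

lemma geom_prod_mult_lin_fps: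
  assumes "inj a" "finite W"
  shows "geom_prod (a ` W) * (\<Prod>w\<in>W. lin_fps (a w)) = 1"
proof -
  have "geom_prod (a ` W) = (\<Prod>w\<in>W. geom_fps (a w))"
    unfolding geom_prod_def using assms by (simp add: prod.reindex inj_on_subset[of a UNIV])
  then have "geom_prod (a ` W) * (\<Prod>w\<in>W. lin_fps (a w)) = (\<Prod>w\<in>W. geom_fps (a w) * lin_fps (a w))"
    by (simp add: prod.distrib)
  also have "\<dots> = 1" by (simp add: geom_fps_mult_lin_fps)
  finally show ?thesis .
qed

lemma h_genfun_xpt_ypt:
  assumes inj: "inj a" and l: "is_partition l"
  shows "h_genfun (xpt a l) (ypt a l) = (\<Prod>t<dlen l. lin_fps (a (- frob_q l t))) *
    (geom_prod (set (pole_list a l N)) * (\<Prod>w\<in>{- int N..0}. lin_fps (a w)))"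
proof -
  let ?A = "a ` {- int N..0}"
  have "set (xpt a l) \<inter> ?A = {}"
    using distinct_pole_list[OF inj l, of N]
    by (simp only: pole_list_def distinct_append set_pole_list_tail)
  then have "geom_prod (set (pole_list a l N)) = geom_prod (set (xpt a l)) * geom_prod ?A"
    unfolding set_pole_list geom_prod_def by (simp add: prod.union_disjoint)
  then have "geom_prod (set (pole_list a l N)) * (\<Prod>w\<in>{- int N..0}. lin_fps (a w)) =
      geom_prod (set (xpt a l))"
    using geom_prod_mult_lin_fps[OF inj, of "{- int N..0}"] by (simp add: mult.assoc)
  moreover have "prod_list (map geom_fps (xpt a l)) = geom_prod (set (xpt a l))"
    using distinct_xpt[OF inj l] by (simp add: geom_prod_def prod.distinct_set_conv_list)
  moreover have "prod_list (map (\<lambda>y. lin_fps (- y)) (ypt a l)) = (\<Prod>t<dlen l. lin_fps (a (- frob_q l t)))"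
    by (simp add: ypt_eq comp_def prod_list_upt_0)
  ultimately show ?thesis
    by (simp add: h_genfun_def)
qed

lemma prod_list_upt_shift: "prod_list (map (\<lambda>m. f (int m + c)) [1..<n]) = prod f {1 + c..int n - 1 + c}"
proof -
  have "prod_list (map (\<lambda>m. f (int m + c)) [1..<n]) = (\<Prod>m\<in>{1..<n}. f (int m + c))"
    by (simp add: prod.distinct_set_conv_list[symmetric])
  also have "\<dots> = prod f {1 + c..int n - 1 + c}"
    by (rule prod.reindex_bij_witness[of _ "\<lambda>w. nat (w - c)" "\<lambda>m. int m + c"]) auto
  finally show ?thesis .
qed

lemma prod_list_lin_fps_nth_0: "prod_list (map (\<lambda>x. lin_fps (f x)) xs) $ 0 = 1"
  by (induction xs) auto

lemma evalL_hshift_eq_pole_sum: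
  assumes inj: "inj a" and l: "is_partition l" and P: "- int N \<le> P"
  shows "evalL (hshift (P + 1 + int j) (shiftseq (- int j) a)) (xpt a l) (ypt a l) =
    (\<Sum>z\<in>set (pole_list a l N).
       newton_basis a j z * entry_numer a l N P z / lagrange_den (set (pole_list a l N)) z)"
proof -
  let ?k = "P + 1 + int j" and ?Z = "set (pole_list a l N)" and ?d = "dlen l"
  let ?Lin = "\<lambda>W. \<Prod>w\<in>W. lin_fps (a w)" and ?LinQ = "\<Prod>t<?d. lin_fps (a (- frob_q l t))"
  define Y where "Y = map a [1 - int j..0] @ map a [1..P] @ map (\<lambda>t. a (- frob_q l t)) [0..<?d]
    @ map a [- int N..min 0 P]"
  have prod_Y: "prod_list (map (\<lambda>y. z - y) Y) = newton_basis a j z * entry_numer a l N P z" for z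
    by (simp add: Y_def newton_basis_def entry_numer_def prod_list_upto prod_list_upt_0 comp_def mult_ac)
  have "int (length Y) = int j + P + int ?d + int N + 1"
    using P by (simp add: Y_def)
  then have "lagrange_sum 0 Y ?Z = fps_coeff_int (prod_list (map lin_fps Y) * geom_prod ?Z) ?k"
    using lagrange_sum_eq_coeff[of ?Z 0 Y] card_pole_set[OF inj l] by (simp add: add_ac)
  moreover have "fps_coeff_int (prod_list (map lin_fps Y) * geom_prod ?Z) ?k =
      evalL (hshift ?k (shiftseq (- int j) a)) (xpt a l) (ypt a l)"
  proof (cases "?k \<ge> 1")
    case True
    have "prod_list (map lin_fps Y) = ?Lin {1 - int j..0} * ?Lin {1..P} * ?Lin {- int N..min 0 P} * ?LinQ"
      by (simp add: Y_def prod_list_upto prod_list_upt_0 comp_def mult_ac)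
    also have "\<dots> = ?Lin {1 - int j..P} * ?Lin {- int N..0} * ?LinQ"
      using prod_int_intervals_swap[of j P N "\<lambda>w. lin_fps (a w)"] True P by simp
    finally have "prod_list (map lin_fps Y) * geom_prod ?Z =
        ?Lin {1 - int j..P} * h_genfun (xpt a l) (ypt a l)"
      using h_genfun_xpt_ypt[OF inj l, of N] by (simp add: mult_ac)
    moreover have "prod_list (map (\<lambda>m. lin_fps (shiftseq (- int j) a (int m))) [1..<nat ?k]) =
        ?Lin {1 - int j..P}"
      using prod_list_upt_shift[of "\<lambda>w. lin_fps (a w)" "- int j" "nat ?k"] True
      unfolding shiftseq_def by simp
    ultimately show ?thesis
      by (simp only: evalL_hshift)
  next
    case False
    then show ?thesis
      by (simp add: evalL_hshift fps_coeff_int_nonpos prod_list_lin_fps_nth_0)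
  qed
  ultimately show ?thesis
    by (simp add: lagrange_sum_def prod_Y)
qed

definition left_factor :: "(int \<Rightarrow> complex) \<Rightarrow> nat list \<Rightarrow> nat list \<Rightarrow> nat \<Rightarrow> nat \<Rightarrow> complex" where
  "left_factor a l mu i u =
    entry_numer a l (length mu) (int (mu ! i) - int i - 1) (pole_list a l (length mu) ! u)
    / lagrange_den (set (pole_list a l (length mu))) (pole_list a l (length mu) ! u)"

lemma evalL_schurA_eq_det:
  assumes inj: "inj a" and l: "is_partition l"
  shows "evalL (schurA mu a) (xpt a l) (ypt a l) = det (mat (length mu) (length mu) (\<lambda>(i, j).
    \<Sum>u<dlen l + length mu + 1. left_factor a l mu i u * newton_basis a j (pole_list a l (length mu) ! u)))"
proof -
  let ?N = "length mu"
  have entry: "evalL (hshift (int (mu ! i) - int i + int j) (shiftseq (- int j) a)) (xpt a l) (ypt a l) =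
      (\<Sum>u<dlen l + ?N + 1. left_factor a l mu i u * newton_basis a j (pole_list a l ?N ! u))"
    if "i < ?N" for i j
  proof -
    have "int (mu ! i) - int i + int j = (int (mu ! i) - int i - 1) + 1 + int j" by simp
    moreover have "- int ?N \<le> int (mu ! i) - int i - 1" using that by simp
    ultimately show ?thesis
      unfolding left_factor_def
      by (simp only: evalL_hshift_eq_pole_sum[OF inj l] sum_pole_set[OF inj l]) (simp add: mult_ac)
  qed
  show ?thesis
    unfolding schurA_def evalL_hom.hom_det[symmetric]
    by (rule arg_cong[of _ _ det], rule eq_matI) (auto simp: entry)
qed

section \<open>Determinants of matrices that factor through few dimensions\<close>

lemma det_eq_0_if_zero_row:
  assumes "A \<in> carrier_mat n n" "k < n" "\<And>j. j < n \<Longrightarrow> A $$ (k, j) = 0"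
  shows "det A = 0"
  unfolding det_def'[OF assms(1)]
proof (rule sum.neutral, rule ballI)
  fix p assume "p \<in> {p. p permutes {0..<n}}"
  then have "p k < n" using assms(2) permutes_in_image[of p "{0..<n}" k] by auto
  then have "A $$ (k, p k) = 0" using assms(3) by simp
  then have "(\<Prod>i = 0..<n. A $$ (i, p i)) = 0"
    using assms(2) by (intro prod_zero) auto
  then show "signof p * (\<Prod>i = 0..<n. A $$ (i, p i)) = 0" by simp
qed

lemma det_eq_0_if_zero_col:
  assumes "A \<in> carrier_mat n n" "k < n" "\<And>i. i < n \<Longrightarrow> A $$ (i, k) = 0"
  shows "det A = 0"
  using det_eq_0_if_zero_row[of "transpose_mat A" n k] det_transpose[OF assms(1)] assms by simp

lemma det_mat_sum_prod:
  "det (mat N N (\<lambda>(i, j). \<Sum>u<N. A i u * B u j)) =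
    det (mat N N (\<lambda>(i, u). A i u)) * det (mat N N (\<lambda>(u, j). B u j))"
proof -
  have "mat N N (\<lambda>(i, u). A i u) * mat N N (\<lambda>(u, j). B u j) = mat N N (\<lambda>(i, j). \<Sum>u<N. A i u * B u j)"
    by (rule eq_matI) (auto simp: scalar_prod_def atLeast0LessThan)
  then show ?thesis
    using det_mult[of "mat N N (\<lambda>(i, u). A i u)" N "mat N N (\<lambda>(u, j). B u j)"] by simp
qed

lemma det_mat_sum_prod_eq_0:
  assumes "K < N"
  shows "det (mat N N (\<lambda>(i, j). \<Sum>u<K. A i u * B u j)) = 0"
proof -
  let ?A = "\<lambda>i u. if u < K then A i u else 0"
  have "(\<Sum>u<K. A i u * B u j) = (\<Sum>u<N. ?A i u * B u j)" for i j
    by (rule sum.mono_neutral_cong_left) (use assms in auto)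
  then have "det (mat N N (\<lambda>(i, j). \<Sum>u<K. A i u * B u j)) =
      det (mat N N (\<lambda>(i, u). ?A i u)) * det (mat N N (\<lambda>(u, j). B u j))"
    by (simp add: det_mat_sum_prod)
  also have "det (mat N N (\<lambda>(i, u). ?A i u)) = 0"
    by (rule det_eq_0_if_zero_col[of _ N "N - 1"]) (use assms in auto)
  finally show ?thesis by simp
qed

text \<open>If the first \<open>m\<close> rows of \<open>R\<close> are supported on fewer than \<open>m\<close> columns, then \<open>R V\<close> factors
  through \<open>|S| + (N - m) < N\<close> dimensions: keep the columns in \<open>S\<close>, and replace each remaining row
  of \<open>R V\<close> by a unit vector.\<close>

lemma det_mat_sum_prod_eq_0_if_rows_supported:
  assumes "m \<le> N" "S \<subseteq> {..<n::nat}" "card S < m"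
    and supp: "\<And>i u. i < m \<Longrightarrow> u < n \<Longrightarrow> u \<notin> S \<Longrightarrow> R i u = 0"
  shows "det (mat N N (\<lambda>(i, j). \<Sum>u<n. R i u * V u j)) = 0"
proof -
  define ss where "ss = sorted_list_of_set S"
  define s where "s = card S"
  define K where "K = s + (N - m)"
  have "finite S" using assms(2) finite_subset by blast
  then have S: "length ss = s" "distinct ss" "set ss = S"
    unfolding ss_def s_def by auto
  define A where "A i u = (if u < s then R i (ss ! u) else if i = m + (u - s) then 1 else 0)" for i u
  define B where "B u j = (if u < s then V (ss ! u) j else (\<Sum>v\<in>{..<n} - S. R (m + (u - s)) v * V v j))"
    for u j
  have "(\<Sum>u<n. R i u * V u j) = (\<Sum>u<K. A i u * B u j)" if "i < N" for i j
  proof -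
    have "(\<Sum>u<n. R i u * V u j) = (\<Sum>u\<in>S. R i u * V u j) + (\<Sum>u\<in>{..<n} - S. R i u * V u j)"
      using assms(2) by (metis (no_types, lifting) finite_lessThan sum.subset_diff add.commute)
    also have "(\<Sum>u\<in>S. R i u * V u j) = (\<Sum>u<s. A i u * B u j)"
      unfolding S(3)[symmetric] sum.distinct_set_conv_list[OF S(2)]
      by (simp add: sum_list_sum_nth S(1) atLeast0LessThan A_def B_def)
    also have "(\<Sum>u\<in>{..<n} - S. R i u * V u j) = (\<Sum>u\<in>{s..<K}. A i u * B u j)"
    proof (cases "i < m")
      case True
      then show ?thesis
        using supp by (auto simp: A_def intro!: sum.neutral)
    next
      case False
      have "s + (i - m) \<in> {s..<K}" using False that by (auto simp: K_def)
      then have "(\<Sum>u\<in>{s..<K}. A i u * B u j) = A i (s + (i - m)) * B (s + (i - m)) j"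
        by (rule sum.remove[OF finite_atLeastLessThan, THEN trans])
           (use False in \<open>auto intro!: sum.neutral simp: A_def split: if_split_asm\<close>)
      then show ?thesis using False by (simp add: A_def B_def)
    qed
    also have "(\<Sum>u<s. A i u * B u j) + (\<Sum>u\<in>{s..<K}. A i u * B u j) = (\<Sum>u<K. A i u * B u j)"
      by (metis K_def atLeast0LessThan le_add1 sum.atLeastLessThan_concat zero_le)
    finally show ?thesis .
  qed
  then have "mat N N (\<lambda>(i, j). \<Sum>u<n. R i u * V u j) = mat N N (\<lambda>(i, j). \<Sum>u<K. A i u * B u j)"
    by (intro eq_matI) auto
  moreover have "K < N" using assms(1,3) unfolding K_def s_def by simp
  ultimately show ?thesis
    using det_mat_sum_prod_eq_0 by simp
qed

definition newton_basis_poly :: "(int \<Rightarrow> complex) \<Rightarrow> nat \<Rightarrow> complex poly" where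
  "newton_basis_poly a j = (\<Prod>w\<in>{1 - int j..0}. [:- a w, 1:])"

lemma poly_newton_basis_poly: "poly (newton_basis_poly a j) z = newton_basis a j z"
  by (simp add: newton_basis_poly_def newton_basis_def poly_prod)

lemma degree_newton_basis_poly: "degree (newton_basis_poly a j) = j"
  unfolding newton_basis_poly_def by (subst degree_prod_eq_sum_degree) auto

lemma coeff_newton_basis_poly_degree: "coeff (newton_basis_poly a j) j = 1"
  using lead_coeff_prod[of "\<lambda>w. [:- a w, 1:]" "{1 - int j..0}"] degree_newton_basis_poly[of a j]
  by (simp add: newton_basis_poly_def)

lemma newton_basis_poly_independent:
  assumes "(\<Sum>j<N. smult (c j) (newton_basis_poly a j)) = 0" "j < N"
  shows "c j = 0"
  using assms
proof (induction N)
  case (Suc N)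
  have "\<forall>i\<in>{..<N}. c i * coeff (newton_basis_poly a i) N = 0"
    by (auto intro!: coeff_eq_0 simp: degree_newton_basis_poly)
  then have "coeff (\<Sum>i<Suc N. smult (c i) (newton_basis_poly a i)) N = c N"
    by (simp add: coeff_sum sum.neutral coeff_newton_basis_poly_degree)
  moreover have "coeff (\<Sum>i<Suc N. smult (c i) (newton_basis_poly a i)) N = 0"
    by (simp only: Suc.prems(1) coeff_0)
  ultimately have "c N = 0" by simp
  then show ?case
    using Suc by (cases "j = N") simp_all
qed simp

text \<open>A generalised Vandermonde determinant: \<open>newton_basis a j\<close> is monic of degree \<open>j\<close>, so a
  kernel vector would give a nonzero polynomial of degree \<open>< N\<close> with \<open>N\<close> roots.\<close>

lemma det_newton_basis_nonzero:
  assumes inj: "inj_on z {..<N}"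
  shows "det (mat N N (\<lambda>(u, j). newton_basis a j (z u))) \<noteq> 0"
proof
  let ?M = "mat N N (\<lambda>(u, j). newton_basis a j (z u))"
  assume "det ?M = 0"
  then obtain v where v: "v \<in> carrier_vec N" "v \<noteq> 0\<^sub>v N" "?M *\<^sub>v v = 0\<^sub>v N"
    using det_0_iff_vec_prod_zero[of ?M N] by auto
  define G where "G = (\<Sum>j<N. smult (vec_index v j) (newton_basis_poly a j))"
  have "poly G (z u) = 0" if "u < N" for u
  proof -
    have "poly G (z u) = vec_index (?M *\<^sub>v v) u"
      using that v(1) by (simp add: G_def poly_sum poly_newton_basis_poly scalar_prod_def
          atLeast0LessThan mult.commute)
    then show ?thesis using v(3) that by simp
  qed
  then have roots: "z ` {..<N} \<subseteq> {x. poly G x = 0}" by auto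
  have deg: "degree G \<le> N - 1"
    unfolding G_def
  proof (rule degree_sum_le)
    fix j assume "j \<in> {..<N}"
    then show "degree (smult (vec_index v j) (newton_basis_poly a j)) \<le> N - 1"
      using degree_smult_le[of "vec_index v j" "newton_basis_poly a j"]
      by (simp add: degree_newton_basis_poly)
  qed simp
  have "G = 0"
  proof (rule ccontr)
    assume G: "G \<noteq> 0"
    have "N = card (z ` {..<N})" using inj by (simp add: card_image)
    also have "\<dots> \<le> card {x. poly G x = 0}" by (rule card_mono[OF poly_roots_finite[OF G] roots])
    also have "\<dots> \<le> degree G" by (rule card_poly_roots_bound[OF G])
    finally have "N = 0" using deg by simp
    then show False using G by (simp add: G_def)
  qed
  then have "vec_index v j = 0" if "j < N" for j
    using newton_basis_poly_independent[OF \<open>G = 0\<close>[unfolded G_def]] that by blast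
  then show False using v(1,2) by (auto intro!: eq_vecI)
qed

section \<open>Vanishing\<close>

lemma left_factor_window:
  "- int (length mu) \<le> w \<Longrightarrow> w \<le> int (mu ! i) - int i - 1 \<Longrightarrow> pole_list a l (length mu) ! u = a w \<Longrightarrow>
    left_factor a l mu i u = 0"
  by (simp add: left_factor_def entry_numer_window)

lemma left_factor_frob_q:
  "t < dlen l \<Longrightarrow> pole_list a l (length mu) ! u = a (- frob_q l t) \<Longrightarrow> left_factor a l mu i u = 0"
  by (simp add: left_factor_def entry_numer_frob_q)

text \<open>In both lemmas below, row \<open>r\<close> witnesses \<open>\<mu> \<not>\<subseteq> \<lambda>\<close> through \<open>\<lambda>\<^sub>r < \<mu>\<^sub>r\<close>, where \<open>lr = \<lambda>\<^sub>r\<close>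
  (zero beyond the length of \<open>\<lambda>\<close>); the first \<open>r + 1\<close> rows of the left factor are supported on
  at most \<open>r\<close> columns.\<close>

lemma left_factor_support_diagonal_row:
  assumes l: "is_partition l" and mu: "is_partition mu" and r: "r < length mu"
    and lr: "lr = (if r < length l then l ! r else 0)" "lr < mu ! r" "r \<le> lr"
    and i: "i \<le> r" and u: "u < dlen l + length mu + 1" "\<not> (u < r \<and> u < dlen l)"
  shows "left_factor a l mu i u = 0"
proof -
  have P: "int lr - int r \<le> int (mu ! i) - int i - 1"
    using partition_nth_antimono[OF mu i r] lr(2) i by simp
  show ?thesis
  proof (cases "u < dlen l")
    case True
    then have ul: "r \<le> u" "u < length l"
      using u(2) dlen_le_length[of l] by auto
    then have "int (l ! u) - int u \<le> int lr - int r"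
      using shifted_part_strict_antimono[OF l, of r u] lr(1) by (cases "r = u") auto
    moreover have "0 < int (l ! u) - int u"
      using shifted_part_pos_iff[OF l ul(2)] True by simp
    ultimately show ?thesis
      using left_factor_window[of mu "int (l ! u) - int u" i a l u] P pole_list_nth_xpt[OF True] by simp
  next
    case False
    then obtain q where "q \<le> length mu" "pole_list a l (length mu) ! u = a (- int q)"
      using pole_list_tail_cases[of l u "length mu"] u(1) by (metis not_le)
    then show ?thesis
      using left_factor_window[of mu "- int q" i a l u] P lr(3) by simp
  qed
qed

lemma frob_q_below_row:
  assumes l: "is_partition l" and lr: "lr = (if r < length l then l ! r else 0)"
    and t: "lr \<le> t" "t < dlen l"
  shows "0 \<le> frob_q l t" "frob_q l t < int r - int lr"
proof -
  have "conjp l (lr + 1) \<le> r"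
    using less_conjp_iff[OF l, of r "lr + 1"] lr by (cases "r < length l") auto
  then have "conjp l (t + 1) \<le> r"
    using conjp_antimono[OF l, of "lr + 1" "t + 1"] t(1) by simp
  then show "frob_q l t < int r - int lr"
    using t(1) unfolding frob_q_def by simp
  show "0 \<le> frob_q l t" by (rule frob_q_nonneg[OF l t(2)])
qed

lemma frob_q_values_below_row:
  assumes l: "is_partition l" and lr: "lr = (if r < length l then l ! r else 0)" "lr < r"
  shows "(\<lambda>t. nat (frob_q l t)) ` {lr..<dlen l} \<subseteq> {..<r - lr}"
    and "card ((\<lambda>t. nat (frob_q l t)) ` {lr..<dlen l}) = dlen l - lr"
proof -
  show "(\<lambda>t. nat (frob_q l t)) ` {lr..<dlen l} \<subseteq> {..<r - lr}"
  proof
    fix q assume "q \<in> (\<lambda>t. nat (frob_q l t)) ` {lr..<dlen l}"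
    then obtain t where "t \<in> {lr..<dlen l}" "q = nat (frob_q l t)" by blast
    moreover have "0 \<le> frob_q l t" "frob_q l t < int (r - lr)"
      using frob_q_below_row[OF l lr(1), of t] calculation(1) lr(2) by auto
    ultimately show "q \<in> {..<r - lr}" by (simp add: nat_less_iff)
  qed
  have "inj_on (\<lambda>t. nat (frob_q l t)) {lr..<dlen l}"
  proof (rule inj_onI)
    fix t t' assume tt: "t \<in> {lr..<dlen l}" "t' \<in> {lr..<dlen l}" "nat (frob_q l t) = nat (frob_q l t')"
    have "0 \<le> frob_q l t" "0 \<le> frob_q l t'"
      using frob_q_below_row(1)[OF l lr(1)] tt(1,2) by auto
    then have "frob_q l t = frob_q l t'"
      using tt(3) by simp
    then show "t = t'"
      using frob_q_strict_antimono[OF l, of t t'] frob_q_strict_antimono[OF l, of t' t]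
      by (cases t t' rule: linorder_cases) auto
  qed
  then show "card ((\<lambda>t. nat (frob_q l t)) ` {lr..<dlen l}) = dlen l - lr"
    by (simp add: card_image)
qed

lemma left_factor_support_offdiagonal_row:
  assumes l: "is_partition l" and mu: "is_partition mu" and r: "r < length mu"
    and lr: "lr = (if r < length l then l ! r else 0)" "lr < mu ! r" "lr < r"
  defines "Q \<equiv> (\<lambda>t. nat (frob_q l t)) ` {lr..<dlen l}"
  defines "S \<equiv> {..<dlen l} \<union> (\<lambda>q. dlen l + q) ` ({..<r - lr} - Q)"
  shows "card S \<le> r"
    and "i \<le> r \<Longrightarrow> u < dlen l + length mu + 1 \<Longrightarrow> u \<notin> S \<Longrightarrow> left_factor a l mu i u = 0"
proof -
  note Q = frob_q_values_below_row[OF l lr(1,3), folded Q_def]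
  have "card S \<le> card {..<dlen l} + card ((\<lambda>q. dlen l + q) ` ({..<r - lr} - Q))"
    unfolding S_def by (rule card_Un_le)
  also have "\<dots> \<le> dlen l + card ({..<r - lr} - Q)"
    using card_image_le[of "{..<r - lr} - Q" "\<lambda>q. dlen l + q"] by simp
  also have "\<dots> = dlen l + (r - lr - (dlen l - lr))"
    using card_Diff_subset[OF finite_subset[OF Q(1)] Q(1)] Q(2) by simp
  also have "\<dots> \<le> r"
    using card_mono[OF _ Q(1)] Q(2) lr(3) by simp
  finally show "card S \<le> r" .
  assume i: "i \<le> r" and u: "u < dlen l + length mu + 1" "u \<notin> S"
  have P: "int lr - int r \<le> int (mu ! i) - int i - 1"
    using partition_nth_antimono[OF mu i r] lr(2) i by simp
  have "dlen l \<le> u" using u(2) unfolding S_def by auto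
  then obtain q where q: "q \<le> length mu" "u = dlen l + q" "pole_list a l (length mu) ! u = a (- int q)"
    using pole_list_tail_cases u(1) by blast
  show "left_factor a l mu i u = 0"
  proof (cases "q \<in> Q")
    case True
    then obtain t where "t \<in> {lr..<dlen l}" "q = nat (frob_q l t)" unfolding Q_def by blast
    then show ?thesis
      using left_factor_frob_q[of t l a mu u i] frob_q_below_row(1)[OF l lr(1)] q(3) by simp
  next
    case False
    moreover have "q \<notin> {..<r - lr} - Q" using u(2) q(2) unfolding S_def by blast
    ultimately have "r - lr \<le> q" by simp
    then show ?thesis
      using left_factor_window[of mu "- int q" i a l u] P q lr(3) by simp
  qed
qed

theorem evalL_schurA_vanish:
  assumes inj: "inj a" and l: "is_partition l" and mu: "is_partition mu" and "\<not> subdiag mu l"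
  shows "evalL (schurA mu a) (xpt a l) (ypt a l) = 0"
proof -
  let ?n = "dlen l + length mu + 1"
  obtain r where r: "r < length mu" and lr: "(if r < length l then l ! r else 0) < mu ! r"
    using not_subdiag_witness[OF mu assms(4)] by blast
  define lr where "lr = (if r < length l then l ! r else 0)"
  obtain S where S: "S \<subseteq> {..<?n}" "card S < r + 1"
    and supp: "\<And>i u. i < r + 1 \<Longrightarrow> u < ?n \<Longrightarrow> u \<notin> S \<Longrightarrow> left_factor a l mu i u = 0"
  proof (cases "r \<le> lr")
    case True
    let ?S = "{u. u < r \<and> u < dlen l}"
    show ?thesis
    proof (rule that[of ?S])
      show "?S \<subseteq> {..<?n}" by auto
      have "card ?S \<le> card {..<r}" by (rule card_mono) auto
      then show "card ?S < r + 1" by simp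
      show "left_factor a l mu i u = 0" if "i < r + 1" "u < ?n" "u \<notin> ?S" for i u
        using left_factor_support_diagonal_row[OF l mu r lr_def lr[folded lr_def] True, of i u] that
        by auto
    qed
  next
    case False
    note support = left_factor_support_offdiagonal_row[OF l mu r lr_def lr[folded lr_def]]
    let ?S = "{..<dlen l} \<union> (\<lambda>q. dlen l + q) ` ({..<r - lr} - (\<lambda>t. nat (frob_q l t)) ` {lr..<dlen l})"
    show ?thesis
    proof (rule that[of ?S])
      show "?S \<subseteq> {..<?n}" using r by auto
      show "card ?S < r + 1"
        using support(1) False by simp
      show "left_factor a l mu i u = 0" if "i < r + 1" "u < ?n" "u \<notin> ?S" for i u
        using support(2)[of i u a] False that by simp
    qed
  qed
  show ?thesis
    unfolding evalL_schurA_eq_det[OF inj l]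
    by (rule det_mat_sum_prod_eq_0_if_rows_supported[of "r + 1" _ S ?n]) (use r S supp in auto)
qed

section \<open>Non-vanishing\<close>

lemma det_mat_lower_triangular:
  assumes "\<And>i j. i < j \<Longrightarrow> j < N \<Longrightarrow> f i j = 0"
  shows "det (mat N N (\<lambda>(i, j). f i j)) = (\<Prod>i<N. f i i)"
proof -
  have "det (mat N N (\<lambda>(i, j). f i j)) = prod_list (diag_mat (mat N N (\<lambda>(i, j). f i j)))"
    by (rule det_lower_triangular[of N]) (use assms in auto)
  also have "\<dots> = (\<Prod>i<N. f i i)"
    by (simp add: diag_mat_def prod.distinct_set_conv_list[symmetric] atLeast0LessThan comp_def)
  finally show ?thesis .
qed

text \<open>Row \<open>v\<close> of the left factor for \<open>\<mu> = \<lambda>\<close> is matched with the column of the pole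
  \<open>a\<^bsub>\<lambda>\<^sub>v - v\<^esub>\<close>, an entry of \<open>x(\<lambda>)\<close> for diagonal rows and \<open>a\<^sub>-\<^sub>q\<close> with \<open>q = v - \<lambda>\<^sub>v\<close> otherwise.\<close>

definition diag_col :: "nat list \<Rightarrow> nat \<Rightarrow> nat" where
  "diag_col l v = (if v < dlen l then v else dlen l + nat (int v - int (l ! v)))"

lemma pole_list_diag_col:
  assumes l: "is_partition l" and v: "v < length l"
  shows "pole_list a l (length l) ! diag_col l v = a (int (l ! v) - int v)"
proof (cases "v < dlen l")
  case False
  then have "int (l ! v) - int v \<le> 0"
    using shifted_part_pos_iff[OF l v] by simp
  moreover have "nat (int v - int (l ! v)) \<le> length l"
    using v by simp
  ultimately show ?thesis
    using pole_list_nth_tail[of "nat (int v - int (l ! v))" "length l" a l] False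
    by (simp add: diag_col_def)
qed (simp add: diag_col_def pole_list_nth_xpt)

lemma diag_col_strict_mono:
  assumes l: "is_partition l" and "v < v'" "v' < length l"
  shows "diag_col l v < diag_col l v'"
  using shifted_part_strict_antimono[OF assms] shifted_part_pos_iff[OF l, of v]
    shifted_part_pos_iff[OF l, of v'] assms(2,3)
  by (auto simp: diag_col_def)

lemma diag_col_less:
  assumes "v < length l"
  shows "diag_col l v < dlen l + length l + 1"
proof -
  have "nat (int v - int (l ! v)) \<le> v" by simp
  then show ?thesis using assms by (simp add: diag_col_def)
qed

lemma inj_on_diag_col: "is_partition l \<Longrightarrow> inj_on (diag_col l) {..<length l}"
  by (rule inj_onI) (metis diag_col_strict_mono lessThan_iff linorder_neqE_nat less_irrefl)

lemma left_factor_off_diag_col: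
  assumes l: "is_partition l" and i: "i < length l" and u: "u < dlen l + length l + 1"
    and not_diag: "u \<notin> diag_col l ` {..<length l}"
  shows "left_factor a l l i u = 0"
proof -
  have "dlen l \<le> u"
    using not_diag dlen_le_length[of l] by (metis diag_col_def image_eqI lessThan_iff not_le order_less_le_trans)
  then obtain q where q: "q \<le> length l" "u = dlen l + q" "pole_list a l (length l) ! u = a (- int q)"
    using pole_list_tail_cases u by blast
  show ?thesis
  proof (cases "- int q \<le> int (l ! i) - int i - 1")
    case True
    then show ?thesis using left_factor_window[of l "- int q" i a l u] q by simp
  next
    case False
    then have "dlen l \<le> i" "int q \<le> int i - int (l ! i)"
      using shifted_part_pos_iff[OF l i] by auto
    then consider t where "t < dlen l" "frob_q l t = int q"
      | v where "dlen l \<le> v" "v \<le> i" "int v - int (l ! v) = int q"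
      using shifted_part_or_frob_q[OF l _ i, of "int q"] by auto
    then show ?thesis
    proof cases
      case 1
      then show ?thesis using left_factor_frob_q[of t l a l u i] q by simp
    next
      case (2 v)
      then have "diag_col l v = u" using q(2) by (simp add: diag_col_def)
      then show ?thesis using not_diag 2 i by auto
    qed
  qed
qed

lemma left_factor_diag_col_upper:
  assumes l: "is_partition l" and "i < v" "v < length l"
  shows "left_factor a l l i (diag_col l v) = 0"
  using left_factor_window[of l "int (l ! v) - int v" i a l "diag_col l v"]
    shifted_part_strict_antimono[OF assms] pole_list_diag_col[OF l assms(3)] assms(3)
  by simp

lemma left_factor_diag_col_nonzero:
  assumes inj: "inj a" and l: "is_partition l" and v: "v < length l"
  shows "left_factor a l l v (diag_col l v) \<noteq> 0"
proof -
  have "int (l ! v) - int v \<noteq> - frob_q l t" if "t < dlen l" for t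
  proof (cases "v < dlen l")
    case True
    then show ?thesis
      using shifted_part_pos_iff[OF l v] frob_q_nonneg[OF l that] by simp
  qed (use shifted_part_ne_frob_q[OF l _ v that] in simp)
  then have "entry_numer a l (length l) (int (l ! v) - int v - 1) (a (int (l ! v) - int v)) \<noteq> 0"
    by (intro entry_numer_nonzero[OF inj]) auto
  then show ?thesis
    using lagrange_den_nonzero[of "set (pole_list a l (length l))"]
    by (simp add: left_factor_def pole_list_diag_col[OF l v])
qed

theorem evalL_schurA_nonzero:
  assumes inj: "inj a" and l: "is_partition l"
  shows "evalL (schurA l a) (xpt a l) (ypt a l) \<noteq> 0"
proof -
  let ?N = "length l" and ?col = "diag_col l" and ?z = "\<lambda>u. pole_list a l (length l) ! u"
  let ?L = "left_factor a l l" and ?V = "\<lambda>u j. newton_basis a j (?z u)"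
  have "(\<Sum>u<dlen l + ?N + 1. ?L i u * ?V u j) = (\<Sum>v<?N. ?L i (?col v) * ?V (?col v) j)"
    if "i < ?N" for i j
  proof -
    have "(\<Sum>u<dlen l + ?N + 1. ?L i u * ?V u j) = (\<Sum>u\<in>?col ` {..<?N}. ?L i u * ?V u j)"
      by (rule sum.mono_neutral_right)
         (use diag_col_less left_factor_off_diag_col[OF l that] in auto)
    also have "\<dots> = (\<Sum>v<?N. ?L i (?col v) * ?V (?col v) j)"
      by (rule sum.reindex[OF inj_on_diag_col[OF l], unfolded comp_def])
    finally show ?thesis .
  qed
  then have "evalL (schurA l a) (xpt a l) (ypt a l) =
      det (mat ?N ?N (\<lambda>(i, v). ?L i (?col v))) * det (mat ?N ?N (\<lambda>(v, j). ?V (?col v) j))"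
    unfolding evalL_schurA_eq_det[OF inj l] det_mat_sum_prod[symmetric]
    by (intro arg_cong[of _ _ det] eq_matI) (auto simp del: sum.lessThan_Suc)
  moreover have "det (mat ?N ?N (\<lambda>(i, v). ?L i (?col v))) \<noteq> 0"
    using det_mat_lower_triangular[of ?N "\<lambda>i v. ?L i (?col v)"] left_factor_diag_col_upper[OF l]
      left_factor_diag_col_nonzero[OF inj l] by simp
  moreover have "inj_on (\<lambda>v. ?z (?col v)) {..<?N}"
    using inj_on_diag_col[OF l] diag_col_less distinct_pole_list[OF inj l, of ?N]
    by (auto simp: inj_on_def nth_eq_iff_index_eq length_pole_list)
  then have "det (mat ?N ?N (\<lambda>(v, j). ?V (?col v) j)) \<noteq> 0"
    by (rule det_newton_basis_nonzero)
  ultimately show ?thesis by simp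
qed

section \<open>The interpolation formula\<close>

lemma finite_partitions_sum_le: "finite {l. is_partition l \<and> sum_list l \<le> n}"
proof (rule finite_subset)
  have "length l \<le> sum_list l" if "\<forall>x\<in>set l. 0 < (x::nat)" for l
    using that by (induction l) auto
  then show "{l. is_partition l \<and> sum_list l \<le> n} \<subseteq> {xs. set xs \<subseteq> {..n} \<and> length xs \<le> n}"
    using member_le_sum_list by (fastforce simp: is_partition_def)
  show "finite {xs. set xs \<subseteq> {..n} \<and> length xs \<le> n}"
    by (rule finite_lists_length_le) simp
qed

lemma sum_list_le_if_subdiag:
  assumes "subdiag mu l"
  shows "sum_list mu \<le> sum_list l"
proof -
  have "sum_list mu = (\<Sum>i<length mu. mu ! i)"
    by (simp add: sum_list_sum_nth atLeast0LessThan)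
  also have "\<dots> \<le> (\<Sum>i<length mu. l ! i)"
    using assms by (intro sum_mono) (simp add: subdiag_def)
  also have "\<dots> \<le> (\<Sum>i<length l. l ! i)"
    using assms by (intro sum_mono2) (auto simp: subdiag_def)
  also have "\<dots> = sum_list l"
    by (simp add: sum_list_sum_nth atLeast0LessThan)
  finally show ?thesis .
qed

lemma schurA_Nil: "schurA [] a = 1"
proof -
  have "mat 0 0 f = (1\<^sub>m 0 :: symfun mat)" for f
    by (rule eq_matI) auto
  then show ?thesis unfolding schurA_def by simp
qed

lemma evalL_hshift_origin:
  assumes "k \<ge> 1"
  shows "evalL (hshift k b) [0] [0] = 0"
proof -
  have "h_genfun [0] [0] = 1"
    by (simp add: h_genfun_def lin_fps_def geom_fps_def fps_one_def power_0_left)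
  then show ?thesis
    using assms by (simp add: hshift_def evalL_sum evalL_mult evalL_hcomp)
qed

lemma evalL_schurA_origin:
  assumes "is_partition mu" "mu \<noteq> []"
  shows "evalL (schurA mu a) [0] [0] = 0"
proof -
  let ?N = "length mu"
  have "0 < mu ! 0" using partition_nth_pos[OF assms(1)] assms(2) by simp
  then show ?thesis
    unfolding schurA_def evalL_hom.hom_det[symmetric]
    by (intro det_eq_0_if_zero_row[of _ ?N 0]) (use assms(2) evalL_hshift_origin in auto)
qed

context
  fixes a :: "int \<Rightarrow> complex" and f :: symfun and n :: nat and c :: "nat list \<Rightarrow> complex"
  assumes expansion: "f = (\<Sum>l\<in>{l. is_partition l \<and> sum_list l \<le> n}. constL (c l) * schurA l a)"
begin

lemma evalL_expansion:
  "evalL f xs ys = (\<Sum>l\<in>{l. is_partition l \<and> sum_list l \<le> n}. c l * evalL (schurA l a) xs ys)"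
  unfolding expansion by (simp add: evalL_sum evalL_mult)

lemma evalL_expansion_origin: "evalL f [0] [0] = c []"
proof -
  have "[] \<in> {l. is_partition l \<and> sum_list l \<le> n}" by (simp add: is_partition_def)
  then have "evalL f [0] [0] = c [] * evalL (schurA [] a) [0] [0] +
      (\<Sum>l\<in>{l. is_partition l \<and> sum_list l \<le> n} - {[]}. c l * evalL (schurA l a) [0] [0])"
    unfolding evalL_expansion by (rule sum.remove[OF finite_partitions_sum_le])
  also have "(\<Sum>l\<in>{l. is_partition l \<and> sum_list l \<le> n} - {[]}. c l * evalL (schurA l a) [0] [0]) = 0"
    by (rule sum.neutral) (auto simp: evalL_schurA_origin)
  finally show ?thesis by (simp add: schurA_Nil evalL_one)
qed

lemma evalL_expansion_at_partition:
  assumes inj: "inj a" and l: "is_partition l" "sum_list l \<le> n"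
  shows "evalL f (xpt a l) (ypt a l) = c l * evalL (schurA l a) (xpt a l) (ypt a l) +
    (\<Sum>mu\<in>{mu. is_partition mu \<and> subdiag mu l \<and> mu \<noteq> l}. c mu * evalL (schurA mu a) (xpt a l) (ypt a l))"
proof -
  let ?P = "{l. is_partition l \<and> sum_list l \<le> n}"
  let ?S = "{mu. is_partition mu \<and> subdiag mu l \<and> mu \<noteq> l}"
  let ?ev = "\<lambda>mu. c mu * evalL (schurA mu a) (xpt a l) (ypt a l)"
  have S: "?S \<subseteq> ?P - {l}"
    using sum_list_le_if_subdiag l(2) by fastforce
  have "evalL f (xpt a l) (ypt a l) = ?ev l + (\<Sum>mu\<in>?P - {l}. ?ev mu)"
    unfolding evalL_expansion using l by (intro sum.remove[OF finite_partitions_sum_le]) simp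
  also have "(\<Sum>mu\<in>?P - {l}. ?ev mu) = (\<Sum>mu\<in>?S. ?ev mu)"
    using evalL_schurA_vanish[OF inj l(1)]
    by (intro sum.mono_neutral_right[OF _ S]) (auto intro: finite_subset[OF _ finite_partitions_sum_le])
  finally show ?thesis .
qed

end

theorem theorem12:
  fixes a :: "int \<Rightarrow> complex" and f :: symfun and n :: nat and c :: "nat list \<Rightarrow> complex"
  assumes "inj a"
    and "\<forall>m\<in>Poly_Mapping.keys f. wdeg m \<le> n"
    and "f = (\<Sum>l\<in>{l. is_partition l \<and> sum_list l \<le> n}. constL (c l) * schurA l a)"
  shows "c [] = evalL f [0] [0] \<and>
    (\<forall>l. is_partition l \<and> l \<noteq> [] \<and> sum_list l \<le> n \<longrightarrow>
       evalL (schurA l a) (xpt a l) (ypt a l) \<noteq> 0 \<and>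
       c l = (evalL f (xpt a l) (ypt a l)
              - (\<Sum>mu\<in>{mu. is_partition mu \<and> subdiag mu l \<and> mu \<noteq> l}.
                   c mu * evalL (schurA mu a) (xpt a l) (ypt a l)))
             / evalL (schurA l a) (xpt a l) (ypt a l))"
proof -
  have "evalL (schurA l a) (xpt a l) (ypt a l) \<noteq> 0 \<and>
       c l = (evalL f (xpt a l) (ypt a l)
              - (\<Sum>mu\<in>{mu. is_partition mu \<and> subdiag mu l \<and> mu \<noteq> l}.
                   c mu * evalL (schurA mu a) (xpt a l) (ypt a l)))
             / evalL (schurA l a) (xpt a l) (ypt a l)"
    if "is_partition l" "sum_list l \<le> n" for l
    using evalL_schurA_nonzero[OF assms(1) that(1)] evalL_expansion_at_partition[OF assms(3,1) that]
    by (simp add: field_simps)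
  then show ?thesis
    using evalL_expansion_origin[OF assms(3)] by simp
qed

end
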